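(* Let $\mathbf a=(a_1,\dots,a_q)$ be a graceful permutation of length $q$ and let $p$ be an even integer with $2(q-1)/3<p<2q$. Then either $\mathbf a$ or its complement $\bar{\mathbf a}=(q-1-a_1,\dots,q-1-a_q)$ has two adjacent entries $x$ and $y$ (in either order) with $x<y<2(y-x)=p$.
   Context: A graceful permutation of length $n$ is an arrangement $(a_1,\dots,a_n)$ of the integers $\{0,1,\dots,n-1\}$ whose absolute differences $|a_{i+1}-a_i|$ ($1\le i\le n-1$) are exactly $\{1,\dots,n-1\}$. *)

theory Defs
  imports Main
begin

definition graceful_perm :: "nat list \<Rightarrow> bool" where
  "graceful_perm a \<longleftrightarrow>
     distinct a \<and> set a = {0..<length a} \<and>
     {nat \<bar>int (a ! (i+1)) - int (a ! i)\<bar> | i. i + 1 < length a} = {1..<length a}"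

definition complement :: "nat list \<Rightarrow> nat list" where
  "complement a = map (\<lambda>x. length a - 1 - x) a"

definition has_adj_pair :: "nat list \<Rightarrow> int \<Rightarrow> bool" where
  "has_adj_pair a p \<longleftrightarrow>
     (\<exists>i x y. i + 1 < length a \<and> {x, y} = {a ! i, a ! (i+1)} \<and>
        x < y \<and> int y < 2 * (int y - int x) \<and> 2 * (int y - int x) = p)"

end

theory Submission
  imports Defs
begin

text \<open>Write \<open>p = 2d\<close>; then \<open>1 \<le> d < q\<close>, so gracefulness supplies adjacent entries
  \<open>u\<close> and \<open>u + d\<close>, and the wanted inequality \<open>u + d < 2d\<close> just says \<open>u < d\<close>.
  Complementing maps this pair to \<open>q - 1 - u - d\<close> and \<open>q - 1 - u\<close>, which works
  when \<open>q - 1 - u < 2d\<close>. If both fail then \<open>q - 1 \<ge> u + 2d \<ge> 3d\<close>, contradicting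
  \<open>3p > 2(q - 1)\<close>.\<close>

lemma graceful_perm_nth_less:
  assumes "graceful_perm a" and "i < length a"
  shows "a ! i < length a"
  using assms nth_mem[of i a] by (auto simp: graceful_perm_def)

lemma graceful_perm_adjacent_diff:
  assumes "graceful_perm a" and "0 < d" and "d < length a"
  obtains i u where "i + 1 < length a" and "{u, u + d} = {a ! i, a ! (i+1)}"
proof -
  have "d \<in> {nat \<bar>int (a ! (i+1)) - int (a ! i)\<bar> | i. i + 1 < length a}"
    using assms by (simp add: graceful_perm_def)
  then obtain i where i: "i + 1 < length a" and "d = nat \<bar>int (a ! (i+1)) - int (a ! i)\<bar>"
    by blast
  then have "{min (a ! i) (a ! (i+1)), min (a ! i) (a ! (i+1)) + d} = {a ! i, a ! (i+1)}"
    by (auto simp: min_def)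
  with i show thesis by (rule that)
qed

lemma has_adj_pairI:
  assumes "i + 1 < length a" and "{u, u + d} = {a ! i, a ! (i+1)}"
    and "0 < d" and "u < d"
  shows "has_adj_pair a (2 * int d)"
  unfolding has_adj_pair_def using assms by (intro exI[of _ i] exI[of _ u] exI[of _ "u + d"]) simp

lemma complement_adjacent_pair:
  assumes "i + 1 < length a" and "{u, u + d} = {a ! i, a ! (i+1)}"
    and "u + d < length a"
  shows "{length a - 1 - (u + d), length a - 1 - (u + d) + d}
           = {complement a ! i, complement a ! (i+1)}"
proof -
  have "complement a ! j = length a - 1 - a ! j" if "j < length a" for j
    using that by (simp add: complement_def)
  moreover have "length a - 1 - (u + d) + d = length a - 1 - u" using assms(3) by simp
  ultimately show ?thesis using assms(1,2) by (auto simp: doubleton_eq_iff)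
qed

theorem lemma5p8:
  fixes a :: "nat list" and q :: nat and p :: int
  assumes "graceful_perm a" and "length a = q"
    and "even p" and "2 * (int q - 1) < 3 * p" and "p < 2 * int q"
  shows "has_adj_pair a p \<or> has_adj_pair (complement a) p"
proof -
  obtain k where "p = 2 * k" using assms(3) by blast
  define d where "d = nat k"
  have p: "p = 2 * int d" and "0 < d" and "d < q"
    using \<open>p = 2 * k\<close> assms(4,5) by (auto simp: d_def)
  then obtain i u where i: "i + 1 < length a" and pair: "{u, u + d} = {a ! i, a ! (i+1)}"
    using graceful_perm_adjacent_diff assms(1,2) by blast
  have "u + d < q"
    using pair graceful_perm_nth_less[OF assms(1)] i assms(2) by (auto simp: doubleton_eq_iff)
  show ?thesis
  proof (cases "u < d")
    case True
    then show ?thesis using has_adj_pairI[OF i pair \<open>0 < d\<close>] p by simp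
  next
    case False
    have "length (complement a) = q" using assms(2) by (simp add: complement_def)
    moreover have "q - 1 - (u + d) < d" using False assms(4) p \<open>u + d < q\<close> by arith
    ultimately show ?thesis
      using has_adj_pairI[OF _ complement_adjacent_pair[OF i pair] \<open>0 < d\<close>] i assms(2)
        \<open>u + d < q\<close> p by simp
  qed
qed

end
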